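(* Let $T_R:\mathbb{Z}\to\mathbb{Z}$ be defined by $T_R(n)=3n/4$ if $n\equiv 0\pmod 4$, $T_R(n)=(n-2)/4$ if $n\equiv 2\pmod 4$, and $T_R(n)=(3n+1)/2$ if $n$ is odd. Define $T_R^*:\mathbb{Z}\to\mathbb{Z}$ by $T_R^*(n)=T_R(n)$ if $n\equiv 1\pmod 2$ or $n\equiv 0\pmod 4$; $T_R^*(n)=T_R^2(n)$ if $n\equiv 6\pmod 8$ or $n\equiv 2\pmod{16}$; and $T_R^*(n)=T_R^3(n)$ if $n\equiv 26\pmod{32}$, $n\equiv 10\pmod{64}$ or $n\equiv 42\pmod{64}$. Then for every integer $j$: (i) (class $0 \bmod 3$) $T_R^*(12j)=9j$, $T_R^*(48j+18)=9j+3$, $T_R^*(192j+138)=9j+6$, $T_R^*(192j+42)=3j$, $T_R^*(96j+90)=9j+8$, $T_R^*(24j+6)=9j+2$, $T_R^*(6j+3)=9j+5$; (ii) (class $1 \bmod 3$) $T_R^*(12j+4)=9j+3$, $T_R^*(48j+34)=9j+6$, $T_R^*(192j+10)=9j$, $T_R^*(192j+106)=3j+1$, $T_R^*(96j+58)=9j+5$, $T_R^*(24j+22)=9j+8$, $T_R^*(6j+1)=9j+2$; (iii) (class $2 \bmod 3$) $T_R^*(12j+8)=9j+6$, $T_R^*(48j+2)=9j$, $T_R^*(192j+74)=9j+3$, $T_R^*(192j+170)=3j+2$, $T_R^*(96j+26)=9j+2$, $T_R^*(24j+14)=9j+5$, $T_R^*(6j+5)=9j+8$. Here, for each $r\in\{0,1,2\}$,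 the seven residue classes listed in item (i), (ii), (iii) respectively partition the set of integers congruent to $r \pmod 3$. In particular $T_R^*$ maps the integers congruent to $0$ or $2 \pmod 3$ into the integers congruent to $0$ or $2\pmod 3$.
   Context: $T_R^k$ denotes the $k$-fold iterate of $T_R$. *)

theory Defs
  imports Main
begin

definition TR :: "int \<Rightarrow> int" where
  "TR n = (if n mod 4 = 0 then (3 * n) div 4
           else if n mod 4 = 2 then (n - 2) div 4
           else (3 * n + 1) div 2)"

text \<open>T_R^*; the three explicit cases cover all integers, the final else is unreachable.\<close>
definition TRstar :: "int \<Rightarrow> int" where
  "TRstar n = (if n mod 2 = 1 \<or> n mod 4 = 0 then TR n
               else if n mod 8 = 6 \<or> n mod 16 = 2 then (TR ^^ 2) n
               else if n mod 32 = 26 \<or> n mod 64 = 10 \<or> n mod 64 = 42 then (TR ^^ 3) n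
               else undefined)"

definition partitions_list :: "'a set list \<Rightarrow> 'a set \<Rightarrow> bool" where
  "partitions_list Cs S \<longleftrightarrow>
     (\<forall>i < length Cs. \<forall>k < length Cs. i \<noteq> k \<longrightarrow> Cs ! i \<inter> Cs ! k = {}) \<and> \<Union>(set Cs) = S"

end

theory Submission
  imports Defs
begin

text \<open>
  The clauses of \<open>T\<^sub>R\<^sup>*\<close> live on the classes \<open>n \<equiv> 0 (mod 4)\<close>, \<open>2 (mod 16)\<close>,
  \<open>10 (mod 64)\<close>, \<open>42 (mod 64)\<close>, \<open>26 (mod 32)\<close>, \<open>6 (mod 8)\<close> and \<open>n\<close> odd, which
  partition the integers. Following the branches of \<open>T\<^sub>R\<close> for one to three steps shows
  that on each class \<open>T\<^sub>R\<^sup>*\<close> is affine in the parameter, e.g.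
  \<open>T\<^sub>R\<^sup>*(64k + 42) = k\<close>. By the Chinese remainder theorem, cutting the seven classes
  with a residue class mod 3 yields the seven progressions of the theorem (with \<open>k = 3j + i\<close>),
  and the listed values are instances of the affine ones. These values are \<open>0\<close> or \<open>2\<close>
  mod 3, except on \<open>42 (mod 64)\<close>, where \<open>T\<^sub>R\<^sup>*(n) \<equiv> n (mod 3)\<close> because
  \<open>64 \<equiv> 1 (mod 3)\<close>.
\<close>

lemma mod_eq_dvd_mod_eq: "a mod m = c \<Longrightarrow> d dvd m \<Longrightarrow> a mod d = c mod d"
  for a :: "'a::euclidean_semiring_cancel"
  by (metis mod_mod_cancel)

lemma mod_double_cases:
  fixes n m c :: int
  assumes "n mod m = c"
  shows "n mod (2*m) = c \<or> n mod (2*m) = c + m"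
proof -
  have "n mod (m*2) = m * (n div m mod 2) + c"
    using zmod_zmult2_eq[of 2 n m] assms by simp
  then show ?thesis
    by (auto simp: mod2_eq_if mult.commute)
qed

lemma mod_eq_affineE:
  fixes n m c :: int
  assumes "n mod m = c"
  obtains k where "n = m*k + c"
  using that[of "n div m"] assms mult_div_mod_eq[of m n] by simp

lemma range_affine_int:
  fixes m c :: int
  assumes "0 \<le> c" "c < m"
  shows "range (\<lambda>j. m*j + c) = {n. n mod m = c}"
proof (intro set_eqI iffI)
  fix n assume "n \<in> range (\<lambda>j. m*j + c)"
  then show "n \<in> {n. n mod m = c}"
    using assms by auto
next
  fix n assume "n \<in> {n. n mod m = c}"
  then have "n mod m = c"
    by simp
  then obtain j where "n = m*j + c"
    by (rule mod_eq_affineE)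
  then show "n \<in> range (\<lambda>j. m*j + c)"
    by (rule range_eqI)
qed

lemma residue_class_Int_residue_class:
  fixes a q m b r c :: int
  assumes "coprime a q" "m = a*q" "c mod a = b" "c mod q = r" "0 \<le> c" "c < m"
  shows "{n. n mod a = b} \<inter> {n. n mod q = r} = {n. n mod m = c}"
proof (intro set_eqI iffI)
  fix n assume "n \<in> {n. n mod a = b} \<inter> {n. n mod q = r}"
  then have "a dvd n - c" "q dvd n - c"
    using assms(3,4) by (simp_all add: mod_eq_dvd_iff[symmetric])
  then have "m dvd n - c"
    using assms(1,2) by (simp add: divides_mult)
  then show "n \<in> {n. n mod m = c}"
    using assms(5,6) by (simp add: mod_eq_dvd_iff[symmetric])
next
  fix n assume "n \<in> {n. n mod m = c}"
  then show "n \<in> {n. n mod a = b} \<inter> {n. n mod q = r}"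
    using assms(2-4) mod_eq_dvd_mod_eq[of n m c a] mod_eq_dvd_mod_eq[of n m c q] by auto
qed

lemma residue_classes_disjoint:
  fixes d m c c' :: int
  assumes "d dvd m" "c' mod d \<noteq> c"
  shows "{n. n mod d = c} \<inter> {n. n mod m = c'} = {}"
    and "{n. n mod m = c'} \<inter> {n. n mod d = c} = {}"
proof -
  have "n mod d \<noteq> c" if "n mod m = c'" for n
    using mod_eq_dvd_mod_eq[OF that assms(1)] assms(2) by simp
  then show "{n. n mod d = c} \<inter> {n. n mod m = c'} = {}" "{n. n mod m = c'} \<inter> {n. n mod d = c} = {}"
    by blast+
qed

lemma partitions_list_iff_sorted_wrt:
  "partitions_list Cs S \<longleftrightarrow> sorted_wrt (\<lambda>A B. A \<inter> B = {}) Cs \<and> \<Union>(set Cs) = S"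
proof -
  have "(\<forall>i<length Cs. \<forall>k<length Cs. i \<noteq> k \<longrightarrow> Cs!i \<inter> Cs!k = {}) \<longleftrightarrow>
        (\<forall>i k. i < k \<longrightarrow> k < length Cs \<longrightarrow> Cs!i \<inter> Cs!k = {})"
  proof (intro iffI allI impI)
    fix i k assume ordered: "\<forall>i k. i < k \<longrightarrow> k < length Cs \<longrightarrow> Cs!i \<inter> Cs!k = {}"
      and "i < length Cs" "k < length Cs" "i \<noteq> k"
    then show "Cs!i \<inter> Cs!k = {}"
      using ordered[rule_format, of i k] ordered[rule_format, of k i]
      by (auto simp: Int_commute linorder_neq_iff)
  qed auto
  then show ?thesis
    unfolding partitions_list_def sorted_wrt_iff_nth_less by blast
qed

lemma partitions_list_Int:
  assumes "partitions_list Cs S"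
  shows "partitions_list (map (\<lambda>C. C \<inter> T) Cs) (S \<inter> T)"
proof -
  have disjoint: "sorted_wrt (\<lambda>A B. A \<inter> B = {}) Cs" and cover: "\<Union>(set Cs) = S"
    using assms by (simp_all add: partitions_list_iff_sorted_wrt)
  from disjoint have "sorted_wrt (\<lambda>A B. A \<inter> T \<inter> (B \<inter> T) = {}) Cs"
    by (rule sorted_wrt_mono_rel[rotated]) auto
  moreover have "\<Union>(set (map (\<lambda>C. C \<inter> T) Cs)) = S \<inter> T"
    using cover by auto
  ultimately show ?thesis
    by (simp add: partitions_list_iff_sorted_wrt sorted_wrt_map)
qed

lemma TR_mult_4: "TR (4*k) = 3*k"
  by (simp add: TR_def)

lemma TR_mult_4_plus_2: "TR (4*k+2) = k"
  by (simp add: TR_def)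

lemma TR_odd: "TR (2*k+1) = 3*k+2"
proof -
  have "(2*k+1) mod 4 mod 2 = 1"
    using mod_eq_dvd_mod_eq[of "2*k+1" 4 _ 2] by simp
  then have "(2*k+1) mod 4 \<noteq> 0" "(2*k+1) mod 4 \<noteq> 2"
    by auto
  moreover have "3*(2*k+1)+1 = 2*(3*k+2)"
    by simp
  ultimately show ?thesis
    by (simp add: TR_def)
qed

lemma TRstar_eq_TR: "n mod 2 = 1 \<or> n mod 4 = 0 \<Longrightarrow> TRstar n = TR n"
  by (simp add: TRstar_def)

lemma TRstar_eq_TR_TR: "n mod 8 = 6 \<or> n mod 16 = 2 \<Longrightarrow> TRstar n = TR (TR n)"
proof -
  assume clause: "n mod 8 = 6 \<or> n mod 16 = 2"
  then have "n mod 4 = 2"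
    using mod_eq_dvd_mod_eq[of n 8 6 4] mod_eq_dvd_mod_eq[of n 16 2 4] by auto
  then have "n mod 2 = 0"
    using mod_eq_dvd_mod_eq[of n 4 2 2] by simp
  with \<open>n mod 4 = 2\<close> clause show ?thesis
    by (simp add: TRstar_def numeral_2_eq_2)
qed

lemma TRstar_eq_TR_TR_TR:
  "n mod 32 = 26 \<or> n mod 64 = 10 \<or> n mod 64 = 42 \<Longrightarrow> TRstar n = TR (TR (TR n))"
proof -
  assume clause: "n mod 32 = 26 \<or> n mod 64 = 10 \<or> n mod 64 = 42"
  then have "n mod 16 = 10"
    using mod_eq_dvd_mod_eq[of n 32 26 16] mod_eq_dvd_mod_eq[of n 64 _ 16] by auto
  then have "n mod 2 = 0" "n mod 4 = 2" "n mod 8 = 2"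
    using mod_eq_dvd_mod_eq[of n 16 10] by simp_all
  with \<open>n mod 16 = 10\<close> clause show ?thesis
    by (simp add: TRstar_def numeral_3_eq_3)
qed

lemma TRstar_mult_4: "TRstar (4*k) = 3*k"
  by (simp add: TRstar_eq_TR TR_mult_4)

lemma TRstar_16_mult_plus_2: "TRstar (16*k+2) = 3*k"
proof -
  have "TRstar (16*k+2) = TR (TR (4*(4*k)+2))"
    by (simp add: TRstar_eq_TR_TR add.commute)
  then show ?thesis
    by (simp only: TR_mult_4_plus_2 TR_mult_4)
qed

lemma TRstar_64_mult_plus_10: "TRstar (64*k+10) = 3*k"
proof -
  have "TRstar (64*k+10) = TR (TR (TR (4*(4*(4*k)+2)+2)))"
    by (simp add: TRstar_eq_TR_TR_TR add.commute)
  then show ?thesis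
    by (simp only: TR_mult_4_plus_2 TR_mult_4)
qed

lemma TRstar_64_mult_plus_42: "TRstar (64*k+42) = k"
proof -
  have "TRstar (64*k+42) = TR (TR (TR (4*(4*(4*k+2)+2)+2)))"
    by (simp add: TRstar_eq_TR_TR_TR add.commute)
  then show ?thesis
    by (simp only: TR_mult_4_plus_2)
qed

lemma TRstar_32_mult_plus_26: "TRstar (32*k+26) = 3*k+2"
proof -
  have "TRstar (32*k+26) = TR (TR (TR (4*(4*(2*k+1)+2)+2)))"
    by (simp add: TRstar_eq_TR_TR_TR add.commute)
  then show ?thesis
    by (simp only: TR_mult_4_plus_2 TR_odd)
qed

lemma TRstar_8_mult_plus_6: "TRstar (8*k+6) = 3*k+2"
proof -
  have "TRstar (8*k+6) = TR (TR (4*(2*k+1)+2))"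
    by (simp add: TRstar_eq_TR_TR add.commute)
  then show ?thesis
    by (simp only: TR_mult_4_plus_2 TR_odd)
qed

lemma TRstar_odd: "TRstar (2*k+1) = 3*k+2"
  by (simp add: TRstar_eq_TR TR_odd)

definition TRstar_domains :: "int set list" where
  "TRstar_domains =
     [{n. n mod 4 = 0}, {n. n mod 16 = 2}, {n. n mod 64 = 10}, {n. n mod 64 = 42},
      {n. n mod 32 = 26}, {n. n mod 8 = 6}, {n. n mod 2 = 1}]"

lemma TRstar_domains_cover:
  fixes n :: int
  shows "n mod 4 = 0 \<or> n mod 16 = 2 \<or> n mod 64 = 10 \<or> n mod 64 = 42 \<or>
         n mod 32 = 26 \<or> n mod 8 = 6 \<or> n mod 2 = 1"
proof -
  have "n mod 2 = 1 \<or> n mod 4 = 0 \<or> n mod 4 = 2"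
    using mod_double_cases[of n 1 0] mod_double_cases[of n 2 0] by auto
  moreover have "n mod 8 = 6 \<or> n mod 16 = 2 \<or> n mod 16 = 10" if "n mod 4 = 2"
    using that mod_double_cases[of n 4 2] mod_double_cases[of n 8 2] by auto
  moreover have "n mod 32 = 26 \<or> n mod 64 = 10 \<or> n mod 64 = 42" if "n mod 16 = 10"
    using that mod_double_cases[of n 16 10] mod_double_cases[of n 32 10] by auto
  ultimately show ?thesis
    by blast
qed

lemma partitions_list_TRstar_domains: "partitions_list TRstar_domains UNIV"
proof -
  have "sorted_wrt (\<lambda>A B. A \<inter> B = {}) TRstar_domains"
    by (simp add: TRstar_domains_def residue_classes_disjoint)
  moreover have "\<Union>(set TRstar_domains) = UNIV"
    using TRstar_domains_cover by (auto simp: TRstar_domains_def)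
  ultimately show ?thesis
    by (simp add: partitions_list_iff_sorted_wrt)
qed

lemma TRstar_domain_cases:
  fixes n :: int
  obtains k where "n = 4*k" | k where "n = 16*k+2" | k where "n = 64*k+10"
    | k where "n = 64*k+42" | k where "n = 32*k+26" | k where "n = 8*k+6" | k where "n = 2*k+1"
  using TRstar_domains_cover[of n] by (elim disjE mod_eq_affineE) (auto intro: that)

lemma TRstar_mod_3_cases: "TRstar n mod 3 \<in> {0, 2} \<or> TRstar n mod 3 = n mod 3"
proof (cases n rule: TRstar_domain_cases)
  case (4 k)
  then have "n = k + 3*(21*k+14)"
    by simp
  then have "n mod 3 = k mod 3"
    by (simp only: mod_mult_self2)
  moreover have "TRstar n = k"
    using 4 by (simp add: TRstar_64_mult_plus_42)
  ultimately show ?thesis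
    by simp
qed (simp_all add: TRstar_mult_4 TRstar_16_mult_plus_2 TRstar_64_mult_plus_10
  TRstar_32_mult_plus_26 TRstar_8_mult_plus_6 TRstar_odd)

lemma residue_classes_0_mod_3:
  "[range (\<lambda>j::int. 12*j), range (\<lambda>j. 48*j+18), range (\<lambda>j. 192*j+138),
    range (\<lambda>j. 192*j+42), range (\<lambda>j. 96*j+90), range (\<lambda>j. 24*j+6), range (\<lambda>j. 6*j+3)]
   = map (\<lambda>C. C \<inter> {n. n mod 3 = 0}) TRstar_domains"
  by (simp add: TRstar_domains_def range_affine_int range_affine_int[where c = 0, simplified])
    (intro conjI; rule residue_class_Int_residue_class[symmetric]; code_simp)

lemma TRstar_on_0_mod_3:
  fixes j :: int
  shows "TRstar (12*j) = 9*j" "TRstar (48*j+18) = 9*j+3" "TRstar (192*j+138) = 9*j+6"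
    "TRstar (192*j+42) = 3*j" "TRstar (96*j+90) = 9*j+8" "TRstar (24*j+6) = 9*j+2"
    "TRstar (6*j+3) = 9*j+5"
  using TRstar_mult_4[of "3*j"] TRstar_16_mult_plus_2[of "3*j+1"]
    TRstar_64_mult_plus_10[of "3*j+2"] TRstar_64_mult_plus_42[of "3*j"]
    TRstar_32_mult_plus_26[of "3*j+2"] TRstar_8_mult_plus_6[of "3*j"] TRstar_odd[of "3*j+1"]
  by (simp_all add: algebra_simps)

lemma residue_classes_1_mod_3:
  "[range (\<lambda>j::int. 12*j+4), range (\<lambda>j. 48*j+34), range (\<lambda>j. 192*j+10),
    range (\<lambda>j. 192*j+106), range (\<lambda>j. 96*j+58), range (\<lambda>j. 24*j+22), range (\<lambda>j. 6*j+1)]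
   = map (\<lambda>C. C \<inter> {n. n mod 3 = 1}) TRstar_domains"
  by (simp add: TRstar_domains_def range_affine_int)
    (intro conjI; rule residue_class_Int_residue_class[symmetric]; code_simp)

lemma TRstar_on_1_mod_3:
  fixes j :: int
  shows "TRstar (12*j+4) = 9*j+3" "TRstar (48*j+34) = 9*j+6" "TRstar (192*j+10) = 9*j"
    "TRstar (192*j+106) = 3*j+1" "TRstar (96*j+58) = 9*j+5" "TRstar (24*j+22) = 9*j+8"
    "TRstar (6*j+1) = 9*j+2"
  using TRstar_mult_4[of "3*j+1"] TRstar_16_mult_plus_2[of "3*j+2"]
    TRstar_64_mult_plus_10[of "3*j"] TRstar_64_mult_plus_42[of "3*j+1"]
    TRstar_32_mult_plus_26[of "3*j+1"] TRstar_8_mult_plus_6[of "3*j+2"] TRstar_odd[of "3*j"]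
  by (simp_all add: algebra_simps)

lemma residue_classes_2_mod_3:
  "[range (\<lambda>j::int. 12*j+8), range (\<lambda>j. 48*j+2), range (\<lambda>j. 192*j+74),
    range (\<lambda>j. 192*j+170), range (\<lambda>j. 96*j+26), range (\<lambda>j. 24*j+14), range (\<lambda>j. 6*j+5)]
   = map (\<lambda>C. C \<inter> {n. n mod 3 = 2}) TRstar_domains"
  by (simp add: TRstar_domains_def range_affine_int)
    (intro conjI; rule residue_class_Int_residue_class[symmetric]; code_simp)

lemma TRstar_on_2_mod_3:
  fixes j :: int
  shows "TRstar (12*j+8) = 9*j+6" "TRstar (48*j+2) = 9*j" "TRstar (192*j+74) = 9*j+3"
    "TRstar (192*j+170) = 3*j+2" "TRstar (96*j+26) = 9*j+2" "TRstar (24*j+14) = 9*j+5"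
    "TRstar (6*j+5) = 9*j+8"
  using TRstar_mult_4[of "3*j+2"] TRstar_16_mult_plus_2[of "3*j"]
    TRstar_64_mult_plus_10[of "3*j+1"] TRstar_64_mult_plus_42[of "3*j+2"]
    TRstar_32_mult_plus_26[of "3*j"] TRstar_8_mult_plus_6[of "3*j+1"] TRstar_odd[of "3*j+2"]
  by (simp_all add: algebra_simps)

theorem theorem2:
  shows
  "(\<forall>j::int.
      TRstar (12*j) = 9*j \<and> TRstar (48*j+18) = 9*j+3 \<and> TRstar (192*j+138) = 9*j+6 \<and>
      TRstar (192*j+42) = 3*j \<and> TRstar (96*j+90) = 9*j+8 \<and> TRstar (24*j+6) = 9*j+2 \<and>
      TRstar (6*j+3) = 9*j+5) \<and>
   (\<forall>j::int.
      TRstar (12*j+4) = 9*j+3 \<and> TRstar (48*j+34) = 9*j+6 \<and> TRstar (192*j+10) = 9*j \<and>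
      TRstar (192*j+106) = 3*j+1 \<and> TRstar (96*j+58) = 9*j+5 \<and> TRstar (24*j+22) = 9*j+8 \<and>
      TRstar (6*j+1) = 9*j+2) \<and>
   (\<forall>j::int.
      TRstar (12*j+8) = 9*j+6 \<and> TRstar (48*j+2) = 9*j \<and> TRstar (192*j+74) = 9*j+3 \<and>
      TRstar (192*j+170) = 3*j+2 \<and> TRstar (96*j+26) = 9*j+2 \<and> TRstar (24*j+14) = 9*j+5 \<and>
      TRstar (6*j+5) = 9*j+8) \<and>
   partitions_list
     [range (\<lambda>j::int. 12*j), range (\<lambda>j. 48*j+18), range (\<lambda>j. 192*j+138),
      range (\<lambda>j. 192*j+42), range (\<lambda>j. 96*j+90), range (\<lambda>j. 24*j+6), range (\<lambda>j. 6*j+3)]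
     {n. n mod 3 = 0} \<and>
   partitions_list
     [range (\<lambda>j::int. 12*j+4), range (\<lambda>j. 48*j+34), range (\<lambda>j. 192*j+10),
      range (\<lambda>j. 192*j+106), range (\<lambda>j. 96*j+58), range (\<lambda>j. 24*j+22), range (\<lambda>j. 6*j+1)]
     {n. n mod 3 = 1} \<and>
   partitions_list
     [range (\<lambda>j::int. 12*j+8), range (\<lambda>j. 48*j+2), range (\<lambda>j. 192*j+74),
      range (\<lambda>j. 192*j+170), range (\<lambda>j. 96*j+26), range (\<lambda>j. 24*j+14), range (\<lambda>j. 6*j+5)]
     {n. n mod 3 = 2} \<and>
   (\<forall>n::int. n mod 3 \<in> {0, 2} \<longrightarrow> TRstar n mod 3 \<in> {0, 2})"
proof -
  have "partitions_list (map (\<lambda>C. C \<inter> {n. n mod 3 = r}) TRstar_domains) {n. n mod 3 = r}" for r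
    using partitions_list_Int[OF partitions_list_TRstar_domains] by simp
  moreover have "\<forall>n::int. n mod 3 \<in> {0, 2} \<longrightarrow> TRstar n mod 3 \<in> {0, 2}"
    using TRstar_mod_3_cases by metis
  ultimately show ?thesis
    unfolding residue_classes_0_mod_3 residue_classes_1_mod_3 residue_classes_2_mod_3
    using TRstar_on_0_mod_3 TRstar_on_1_mod_3 TRstar_on_2_mod_3 by simp
qed

end
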